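(* Let $X,X_1,X_2,\dots$ be i.i.d. positive random variables with $\mathbb{E}X=1$, let $p\ge2$ be an integer, and suppose $\mathbb{E}X^p<\infty$. For $n\ge p$ let $$\xi_n=\frac{X_1^2\cdots X_p^2}{\left(\frac1n(X_1+\dots+X_n)\right)^p}.$$ Then $\mathbb{E}\xi_n\to(\mathbb{E}X^2)^p$ as $n\to\infty$. *)

theory Defs
  imports "HOL-Probability.Probability"
begin

end

theory Submission
  imports Defs "HOL-Real_Asymp.Real_Asymp"
begin

(* Write xi_n = Y / ((R + S_n) / n)^p with Y = X_1^2 ... X_p^2, R = X_1 + ... + X_p and
   S_n = X_(p+1) + ... + X_n, so that S_n is independent of (Y, R).
   From below, convexity of t \<mapsto> t^-p at c = 1 + R/n gives
   xi_n \<ge> Y/c^p - p Y/c^(p+1) (S_n/n - 1), and the correction term has nonpositive expectation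
   because E S_n = n - p; by dominated convergence E[Y/(1 + R/n)^p] tends to E Y = (E X^2)^p.
   From above, where the truncated variables min(X_i, L), p < i \<le> n, have mean above t < 1 we
   get xi_n \<le> Y (n / ((n - p) t))^p; on the remaining event B we have xi_n \<le> n^p X_1 ... X_p,
   and E[X_1 ... X_p 1_B] = P(B) by independence, which Hoeffding's inequality bounds by
   e^(-c (n - p)).
   Letting t tend to 1 gives the matching upper bound. *)

lemma inverse_power_above_tangent:
  fixes a c :: real
  assumes "0 < a" "0 < c"
  shows "1 / c ^ k - real k / c ^ Suc k * (a - c) \<le> 1 / a ^ k"
proof -
  have "1 - a / c \<le> c / a - 1"
  proof -
    have "0 \<le> (a - c)\<^sup>2 / (a * c)"
      using assms by simp
    also have "\<dots> = a / c + c / a - 2"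
      using assms by (simp add: field_simps power2_eq_square)
    finally show ?thesis by simp
  qed
  then have "1 - real k * (a / c - 1) \<le> 1 + real k * (c / a - 1)"
    using mult_left_mono[of "1 - a / c" "c / a - 1" "real k"] by (simp add: algebra_simps)
  also have "\<dots> \<le> (c / a) ^ k"
    using Bernoulli_inequality[of "c / a - 1" k] assms by simp
  finally have "(1 - real k * (a / c - 1)) / c ^ k \<le> (c / a) ^ k / c ^ k"
    using assms by (simp add: divide_right_mono)
  then show ?thesis
    using assms by (simp add: field_simps power_divide)
qed

lemma (in finite_measure) integrable_power_le:
  fixes f :: "'a \<Rightarrow> real"
  assumes [measurable]: "f \<in> borel_measurable M"
    and "integrable M (\<lambda>x. f x ^ n)" "k \<le> n" "\<And>x. x \<in> space M \<Longrightarrow> 0 \<le> f x"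
  shows "integrable M (\<lambda>x. f x ^ k)"
proof (rule Bochner_Integration.integrable_bound)
  show "integrable M (\<lambda>x. 1 + f x ^ n)"
    using assms(2) by simp
  show "AE x in M. norm (f x ^ k) \<le> norm (1 + f x ^ n)"
  proof (rule AE_I2)
    fix x assume x: "x \<in> space M"
    have "f x ^ k \<le> 1 + f x ^ n"
    proof (cases "f x \<le> 1")
      case True
      then show ?thesis
        using assms(4)[OF x] power_le_one[of "f x" k] zero_le_power[of "f x" n] by linarith
    next
      case False
      then have "f x ^ k \<le> f x ^ n"
        by (intro power_increasing[OF \<open>k \<le> n\<close>]) simp
      then show ?thesis by simp
    qed
    then show "norm (f x ^ k) \<le> norm (1 + f x ^ n)"
      using assms(4)[OF x] by simp
  qed
qed simp

lemma tendsto_ratio_power_add_power_exp: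
  fixes c t e :: real
  assumes "0 < c" "0 < t"
  shows "(\<lambda>n. e * (real n / ((real n - real m) * t)) ^ k + real n ^ k * exp (- c * (real n - real m)))
    \<longlonglongrightarrow> e / t ^ k"
  using assms by real_asymp (simp add: field_simps)

locale iid_sequence = prob_space +
  fixes X :: "nat \<Rightarrow> 'a \<Rightarrow> real"
  assumes random_variable_X [measurable]: "\<And>i. X i \<in> borel_measurable M"
    and indep_X: "indep_vars (\<lambda>_. borel) X UNIV"
    and distr_X: "\<And>i. distr M borel (X i) = distr M borel (X 0)"
begin

lemma distr_comp_X:
  assumes [measurable]: "f \<in> borel_measurable borel"
  shows "distr M borel (\<lambda>\<omega>. f (X i \<omega>)) = distr M borel (\<lambda>\<omega>. f (X 0 \<omega>))"
proof -
  have "distr M borel (\<lambda>\<omega>. f (X i \<omega>)) = distr (distr M borel (X i)) borel f"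
    by (subst distr_distr) (auto simp: comp_def)
  also have "\<dots> = distr (distr M borel (X 0)) borel f"
    by (simp only: distr_X[of i])
  also have "\<dots> = distr M borel (\<lambda>\<omega>. f (X 0 \<omega>))"
    by (subst distr_distr) (auto simp: comp_def)
  finally show ?thesis .
qed

lemma integral_comp_X:
  fixes f :: "real \<Rightarrow> real"
  assumes [measurable]: "f \<in> borel_measurable borel"
  shows "(\<integral>\<omega>. f (X i \<omega>) \<partial>M) = (\<integral>\<omega>. f (X 0 \<omega>) \<partial>M)"
  by (metis distr_X integral_distr random_variable_X assms)

lemma integrable_comp_X:
  fixes f :: "real \<Rightarrow> real"
  assumes [measurable]: "f \<in> borel_measurable borel"
  shows "integrable M (\<lambda>\<omega>. f (X i \<omega>)) \<longleftrightarrow> integrable M (\<lambda>\<omega>. f (X 0 \<omega>))"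
  by (metis distr_X integrable_distr_eq random_variable_X assms)

lemma indep_vars_comp_X:
  assumes "f \<in> borel_measurable borel"
  shows "indep_vars (\<lambda>_. borel) (\<lambda>i \<omega>. f (X i \<omega>)) I"
  using indep_vars_compose2[OF indep_vars_subset[OF indep_X], where Y = "\<lambda>_. f" and N = "\<lambda>_. borel"]
    assms by simp

lemma indep_blocks_integral_mult:
  fixes F G :: "(nat \<Rightarrow> real) \<Rightarrow> real"
  assumes "I \<inter> J = {}"
    and [measurable]: "F \<in> borel_measurable (PiM I (\<lambda>_. borel))"
      "G \<in> borel_measurable (PiM J (\<lambda>_. borel))"
    and "integrable M (\<lambda>\<omega>. F (restrict (\<lambda>i. X i \<omega>) I))"
      "integrable M (\<lambda>\<omega>. G (restrict (\<lambda>i. X i \<omega>) J))"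
  shows "integrable M (\<lambda>\<omega>. F (restrict (\<lambda>i. X i \<omega>) I) * G (restrict (\<lambda>i. X i \<omega>) J))"
    and "expectation (\<lambda>\<omega>. F (restrict (\<lambda>i. X i \<omega>) I) * G (restrict (\<lambda>i. X i \<omega>) J))
       = expectation (\<lambda>\<omega>. F (restrict (\<lambda>i. X i \<omega>) I))
         * expectation (\<lambda>\<omega>. G (restrict (\<lambda>i. X i \<omega>) J))"
proof -
  have "indep_var (PiM I (\<lambda>_. borel)) (\<lambda>\<omega>. restrict (\<lambda>i. X i \<omega>) I)
                  (PiM J (\<lambda>_. borel)) (\<lambda>\<omega>. restrict (\<lambda>i. X i \<omega>) J)"
    using assms(1) by (intro indep_var_restrict[OF indep_X]) auto
  from indep_var_compose[OF this assms(2,3)]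
  have "indep_var borel (\<lambda>\<omega>. F (restrict (\<lambda>i. X i \<omega>) I)) borel (\<lambda>\<omega>. G (restrict (\<lambda>i. X i \<omega>) J))"
    by (simp add: comp_def)
  from indep_var_integrable[OF this assms(4,5)] indep_var_lebesgue_integral[OF this assms(4,5)]
  show "integrable M (\<lambda>\<omega>. F (restrict (\<lambda>i. X i \<omega>) I) * G (restrict (\<lambda>i. X i \<omega>) J))"
    and "expectation (\<lambda>\<omega>. F (restrict (\<lambda>i. X i \<omega>) I) * G (restrict (\<lambda>i. X i \<omega>) J))
       = expectation (\<lambda>\<omega>. F (restrict (\<lambda>i. X i \<omega>) I))
         * expectation (\<lambda>\<omega>. G (restrict (\<lambda>i. X i \<omega>) J))"
    by simp_all
qed

end

locale self_normalized_products = iid_sequence +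
  fixes p :: nat
  assumes X_pos: "\<And>i \<omega>. \<omega> \<in> space M \<Longrightarrow> 0 < X i \<omega>"
    and expectation_X0: "expectation (X 0) = 1"
    and integrable_X0_square: "integrable M (\<lambda>\<omega>. (X 0 \<omega>)\<^sup>2)"
begin

definition prod_sq :: "'a \<Rightarrow> real" where
  "prod_sq \<omega> = (\<Prod>i<p. (X i \<omega>)\<^sup>2)"

definition prod_X :: "'a \<Rightarrow> real" where
  "prod_X \<omega> = (\<Prod>i<p. X i \<omega>)"

definition head_sum :: "'a \<Rightarrow> real" where
  "head_sum \<omega> = (\<Sum>i<p. X i \<omega>)"

definition tail_sum :: "nat \<Rightarrow> 'a \<Rightarrow> real" where
  "tail_sum n \<omega> = (\<Sum>i\<in>{p..<n}. X i \<omega>)"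

definition xi :: "nat \<Rightarrow> 'a \<Rightarrow> real" where
  "xi n \<omega> = prod_sq \<omega> / ((\<Sum>i<n. X i \<omega>) / real n) ^ p"

lemma borel_measurable_prod_sq [measurable]: "prod_sq \<in> borel_measurable M"
  unfolding prod_sq_def by measurable

lemma borel_measurable_prod_X [measurable]: "prod_X \<in> borel_measurable M"
  unfolding prod_X_def by measurable

lemma borel_measurable_head_sum [measurable]: "head_sum \<in> borel_measurable M"
  unfolding head_sum_def by measurable

lemma borel_measurable_xi [measurable]: "xi n \<in> borel_measurable M"
  unfolding xi_def by measurable

lemma integrable_X: "integrable M (X i)"
proof -
  have "integrable M (X 0)"
    using expectation_X0 not_integrable_integral_eq by fastforce
  then show ?thesis
    using integrable_comp_X[of "\<lambda>x. x" i] by simp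
qed

lemma expectation_X: "expectation (X i) = 1"
  using integral_comp_X[of "\<lambda>x. x" i] expectation_X0 by simp

lemma integrable_X_square: "integrable M (\<lambda>\<omega>. (X i \<omega>)\<^sup>2)"
  using integrable_comp_X[of "\<lambda>x. x\<^sup>2" i] integrable_X0_square by simp

lemma expectation_X_square: "expectation (\<lambda>\<omega>. (X i \<omega>)\<^sup>2) = expectation (\<lambda>\<omega>. (X 0 \<omega>)\<^sup>2)"
  using integral_comp_X[of "\<lambda>x. x\<^sup>2" i] by simp

lemma integrable_prod_sq: "integrable M prod_sq"
  and expectation_prod_sq: "expectation prod_sq = (expectation (\<lambda>\<omega>. (X 0 \<omega>)\<^sup>2)) ^ p"
proof -
  have indep: "indep_vars (\<lambda>_. borel) (\<lambda>i \<omega>. (X i \<omega>)\<^sup>2) {..<p}"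
    by (rule indep_vars_comp_X) simp
  show "integrable M prod_sq"
    unfolding prod_sq_def by (rule indep_vars_integrable[OF _ indep]) (auto simp: integrable_X_square)
  show "expectation prod_sq = (expectation (\<lambda>\<omega>. (X 0 \<omega>)\<^sup>2)) ^ p"
    unfolding prod_sq_def
    by (subst indep_vars_lebesgue_integral[OF _ indep])
      (simp_all add: integrable_X_square prod.cong[OF refl expectation_X_square])
qed

lemma integrable_prod_X: "integrable M prod_X"
  and expectation_prod_X: "expectation prod_X = 1"
proof -
  have indep: "indep_vars (\<lambda>_. borel) X {..<p}"
    by (rule indep_vars_subset[OF indep_X]) auto
  show "integrable M prod_X"
    unfolding prod_X_def by (rule indep_vars_integrable[OF _ indep]) (auto simp: integrable_X)
  show "expectation prod_X = 1"
    unfolding prod_X_def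
    by (subst indep_vars_lebesgue_integral[OF _ indep]) (auto simp: integrable_X expectation_X)
qed

lemma integrable_tail_sum: "integrable M (tail_sum n)"
  unfolding tail_sum_def by (auto intro: integrable_X)

lemma expectation_tail_sum: "expectation (tail_sum n) = real (n - p)"
  unfolding tail_sum_def by (subst Bochner_Integration.integral_sum) (auto simp: integrable_X expectation_X)

lemma prod_sq_eq: "prod_sq \<omega> = (prod_X \<omega>)\<^sup>2"
  unfolding prod_sq_def prod_X_def by (simp add: prod_power_distrib)

lemma prod_sq_nonneg: "0 \<le> prod_sq \<omega>"
  by (simp add: prod_sq_eq)

lemma prod_X_pos: "\<omega> \<in> space M \<Longrightarrow> 0 < prod_X \<omega>"
  unfolding prod_X_def using X_pos by (auto intro: prod_pos)

lemma head_sum_nonneg: "\<omega> \<in> space M \<Longrightarrow> 0 \<le> head_sum \<omega>"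
  unfolding head_sum_def using X_pos by (auto intro: sum_nonneg less_imp_le)

lemma tail_sum_nonneg: "\<omega> \<in> space M \<Longrightarrow> 0 \<le> tail_sum n \<omega>"
  unfolding tail_sum_def using X_pos by (auto intro: sum_nonneg less_imp_le)

lemma prod_X_le_head_sum_power:
  assumes "\<omega> \<in> space M"
  shows "prod_X \<omega> \<le> head_sum \<omega> ^ p"
proof -
  have "prod_X \<omega> \<le> (\<Prod>i<p. head_sum \<omega>)"
    unfolding prod_X_def
  proof (rule prod_mono)
    fix i assume "i \<in> {..<p}"
    then have "X i \<omega> \<le> head_sum \<omega>"
      unfolding head_sum_def using X_pos[OF assms] by (intro member_le_sum) (auto intro: less_imp_le)
    then show "0 \<le> X i \<omega> \<and> X i \<omega> \<le> head_sum \<omega>"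
      using X_pos[OF assms, of i] by simp
  qed
  then show ?thesis by simp
qed

lemma sum_X_eq_head_tail:
  assumes "p \<le> n"
  shows "(\<Sum>i<n. X i \<omega>) = head_sum \<omega> + tail_sum n \<omega>"
proof -
  have "{..<n} = {..<p} \<union> {p..<n}" "{..<p} \<inter> {p..<n} = {}"
    using assms by auto
  then show ?thesis
    unfolding head_sum_def tail_sum_def by (simp add: sum.union_disjoint)
qed

lemma xi_eq:
  assumes "p \<le> n"
  shows "xi n \<omega> = prod_sq \<omega> / ((head_sum \<omega> + tail_sum n \<omega>) / real n) ^ p"
  unfolding xi_def using sum_X_eq_head_tail[OF assms] by simp

lemma head_tail_sum_pos:
  assumes "\<omega> \<in> space M" "p \<le> n" "0 < n"
  shows "0 < head_sum \<omega> + tail_sum n \<omega>"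
proof -
  have "0 < (\<Sum>i<n. X i \<omega>)"
    using assms X_pos by (intro sum_pos) auto
  then show ?thesis
    using sum_X_eq_head_tail[OF assms(2)] by simp
qed

lemma xi_le_prod_X:
  assumes "\<omega> \<in> space M" "p \<le> n" "0 < n"
  shows "xi n \<omega> \<le> real n ^ p * prod_X \<omega>"
proof -
  let ?s = "head_sum \<omega> + tail_sum n \<omega>"
  have s: "0 < ?s"
    using head_tail_sum_pos[OF assms] .
  have "prod_sq \<omega> \<le> prod_X \<omega> * head_sum \<omega> ^ p"
    using prod_X_le_head_sum_power[OF assms(1)] prod_X_pos[OF assms(1)]
    by (simp add: prod_sq_eq power2_eq_square)
  also have "\<dots> \<le> prod_X \<omega> * ?s ^ p"
    using prod_X_pos[OF assms(1)] head_sum_nonneg[OF assms(1)] tail_sum_nonneg[OF assms(1)]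
    by (intro mult_left_mono power_mono) auto
  finally have "prod_sq \<omega> / ?s ^ p \<le> prod_X \<omega>"
    using s by (simp add: divide_le_eq mult.commute)
  then have "real n ^ p * (prod_sq \<omega> / ?s ^ p) \<le> real n ^ p * prod_X \<omega>"
    by (rule mult_left_mono) simp
  moreover have "xi n \<omega> = real n ^ p * (prod_sq \<omega> / ?s ^ p)"
    using assms(2) by (simp add: xi_eq power_divide mult.commute)
  ultimately show ?thesis
    by simp
qed

lemma xi_nonneg:
  assumes "\<omega> \<in> space M" "p \<le> n" "0 < n"
  shows "0 \<le> xi n \<omega>"
  using head_tail_sum_pos[OF assms] assms by (simp add: xi_eq prod_sq_nonneg)

lemma integrable_xi:
  assumes "p \<le> n" "0 < n"
  shows "integrable M (xi n)"
proof (rule Bochner_Integration.integrable_bound)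
  show "integrable M (\<lambda>\<omega>. real n ^ p * prod_X \<omega>)"
    using integrable_prod_X by simp
  show "AE \<omega> in M. norm (xi n \<omega>) \<le> norm (real n ^ p * prod_X \<omega>)"
  proof (rule AE_I2)
    fix \<omega> assume \<omega>: "\<omega> \<in> space M"
    show "norm (xi n \<omega>) \<le> norm (real n ^ p * prod_X \<omega>)"
      using xi_le_prod_X[OF \<omega> assms] xi_nonneg[OF \<omega> assms] prod_X_pos[OF \<omega>] by simp
  qed
qed simp

lemma norm_prod_sq_div_le:
  assumes "1 \<le> d"
  shows "norm (prod_sq \<omega> / d) \<le> prod_sq \<omega>"
proof -
  have "0 \<le> prod_sq \<omega> / d" "prod_sq \<omega> / d \<le> prod_sq \<omega>"
    using divide_left_mono[of 1 d "prod_sq \<omega>"] prod_sq_nonneg[of \<omega>] assms by auto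
  then show ?thesis
    by (simp only: real_norm_def abs_of_nonneg)
qed

lemma integrable_prod_sq_div:
  assumes [measurable]: "d \<in> borel_measurable M" and "\<And>\<omega>. \<omega> \<in> space M \<Longrightarrow> 1 \<le> d \<omega>"
  shows "integrable M (\<lambda>\<omega>. prod_sq \<omega> / d \<omega>)"
proof (rule Bochner_Integration.integrable_bound[OF integrable_prod_sq])
  show "AE \<omega> in M. norm (prod_sq \<omega> / d \<omega>) \<le> norm (prod_sq \<omega>)"
    using norm_prod_sq_div_le[OF assms(2)] prod_sq_nonneg by (intro AE_I2) simp
qed simp

lemma head_mult_tail_sum:
  fixes F :: "(nat \<Rightarrow> real) \<Rightarrow> real"
  assumes "F \<in> borel_measurable (PiM {..<p} (\<lambda>_. borel))"
    and "integrable M (\<lambda>\<omega>. F (restrict (\<lambda>i. X i \<omega>) {..<p}))"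
  shows "integrable M (\<lambda>\<omega>. F (restrict (\<lambda>i. X i \<omega>) {..<p}) * tail_sum n \<omega>)"
    and "expectation (\<lambda>\<omega>. F (restrict (\<lambda>i. X i \<omega>) {..<p}) * tail_sum n \<omega>)
       = expectation (\<lambda>\<omega>. F (restrict (\<lambda>i. X i \<omega>) {..<p})) * real (n - p)"
proof -
  define G where "G x = (\<Sum>i\<in>{p..<n}. x i)" for x :: "nat \<Rightarrow> real"
  have "{..<p} \<inter> {p..<n} = {}"
    by auto
  moreover have "G \<in> borel_measurable (PiM {p..<n} (\<lambda>_. borel))"
    unfolding G_def by measurable
  moreover have "G (restrict (\<lambda>i. X i \<omega>) {p..<n}) = tail_sum n \<omega>" for \<omega>
    unfolding G_def tail_sum_def by simp
  ultimately show "integrable M (\<lambda>\<omega>. F (restrict (\<lambda>i. X i \<omega>) {..<p}) * tail_sum n \<omega>)"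
    and "expectation (\<lambda>\<omega>. F (restrict (\<lambda>i. X i \<omega>) {..<p}) * tail_sum n \<omega>)
       = expectation (\<lambda>\<omega>. F (restrict (\<lambda>i. X i \<omega>) {..<p})) * real (n - p)"
    using indep_blocks_integral_mult[of "{..<p}" "{p..<n}" F G] assms integrable_tail_sum
    by (simp_all add: expectation_tail_sum)
qed

subsection \<open>Lower bound\<close>

lemma xi_ge_tangent:
  assumes "\<omega> \<in> space M" "p \<le> n" "0 < n"
  defines "c \<equiv> 1 + head_sum \<omega> / real n"
  defines "w \<equiv> prod_sq \<omega> / c ^ Suc p"
  shows "prod_sq \<omega> / c ^ p - real p * (w * tail_sum n \<omega> / real n - w) \<le> xi n \<omega>"
proof -
  let ?a = "(head_sum \<omega> + tail_sum n \<omega>) / real n"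
  have a_minus_c: "?a - c = tail_sum n \<omega> / real n - 1"
    unfolding c_def using assms(3) by (simp add: field_simps)
  have "0 < ?a"
    using head_tail_sum_pos[OF assms(1-3)] assms(3) by simp
  moreover have "0 < c"
    using head_sum_nonneg[OF assms(1)] unfolding c_def by (simp add: add_pos_nonneg)
  ultimately have tangent: "1 / c ^ p - real p / c ^ Suc p * (?a - c) \<le> 1 / ?a ^ p"
    by (rule inverse_power_above_tangent)
  have "prod_sq \<omega> / c ^ p - real p * (w * tail_sum n \<omega> / real n - w)
      = prod_sq \<omega> * (1 / c ^ p - real p / c ^ Suc p * (?a - c))"
    unfolding a_minus_c w_def by (simp add: algebra_simps)
  also have "\<dots> \<le> prod_sq \<omega> * (1 / ?a ^ p)"
    using tangent by (rule mult_left_mono) (rule prod_sq_nonneg)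
  also have "\<dots> = xi n \<omega>"
    using assms(2) by (simp add: xi_eq)
  finally show ?thesis .
qed

lemma expectation_xi_ge:
  assumes "p \<le> n" "0 < n"
  shows "expectation (\<lambda>\<omega>. prod_sq \<omega> / (1 + head_sum \<omega> / real n) ^ p) \<le> expectation (xi n)"
proof -
  define c where "c \<omega> = 1 + head_sum \<omega> / real n" for \<omega>
  define W where "W \<omega> = prod_sq \<omega> / c \<omega> ^ Suc p" for \<omega>
  have [measurable]: "c \<in> borel_measurable M"
    unfolding c_def by measurable
  have c: "1 \<le> c \<omega>" if "\<omega> \<in> space M" for \<omega>
    using head_sum_nonneg[OF that] unfolding c_def by simp
  have int_Y: "integrable M (\<lambda>\<omega>. prod_sq \<omega> / c \<omega> ^ p)"
    using c by (intro integrable_prod_sq_div one_le_power) auto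
  have int_W: "integrable M W"
    unfolding W_def using c by (intro integrable_prod_sq_div one_le_power) auto
  define F where "F x = (\<Prod>i<p. (x i)\<^sup>2) / (1 + (\<Sum>i<p. x i) / real n) ^ Suc p"
    for x :: "nat \<Rightarrow> real"
  have "F \<in> borel_measurable (PiM {..<p} (\<lambda>_. borel))"
    unfolding F_def by measurable
  moreover have "F (restrict (\<lambda>i. X i \<omega>) {..<p}) = W \<omega>" for \<omega>
    unfolding F_def W_def c_def prod_sq_def head_sum_def by simp
  ultimately have int_WS: "integrable M (\<lambda>\<omega>. W \<omega> * tail_sum n \<omega>)"
    and EWS: "expectation (\<lambda>\<omega>. W \<omega> * tail_sum n \<omega>) = expectation W * real (n - p)"
    using head_mult_tail_sum[of F n] int_W by simp_all
  have "0 \<le> W \<omega>" if "\<omega> \<in> space M" for \<omega>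
    unfolding W_def using prod_sq_nonneg order_trans[OF zero_le_one c[OF that]] by simp
  then have "0 \<le> expectation W"
    by (intro integral_nonneg_AE AE_I2)
  then have "expectation (\<lambda>\<omega>. prod_sq \<omega> / c \<omega> ^ p)
      \<le> expectation (\<lambda>\<omega>. prod_sq \<omega> / c \<omega> ^ p) - real p * (expectation W * real (n - p) / real n - expectation W)"
    using assms by (simp add: field_simps mult_left_mono)
  also have "\<dots> = expectation (\<lambda>\<omega>. prod_sq \<omega> / c \<omega> ^ p - real p * (W \<omega> * tail_sum n \<omega> / real n - W \<omega>))"
    using int_Y int_W int_WS EWS by simp
  also have "\<dots> \<le> expectation (xi n)"
  proof (rule integral_mono)
    show "integrable M (\<lambda>\<omega>. prod_sq \<omega> / c \<omega> ^ p - real p * (W \<omega> * tail_sum n \<omega> / real n - W \<omega>))"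
      using int_Y int_W int_WS by auto
    show "prod_sq \<omega> / c \<omega> ^ p - real p * (W \<omega> * tail_sum n \<omega> / real n - W \<omega>) \<le> xi n \<omega>"
      if "\<omega> \<in> space M" for \<omega>
      unfolding W_def c_def using xi_ge_tangent[OF that assms] .
  qed (rule integrable_xi[OF assms])
  finally show ?thesis
    unfolding c_def .
qed

lemma tendsto_expectation_lower_bound:
  "(\<lambda>n. expectation (\<lambda>\<omega>. prod_sq \<omega> / (1 + head_sum \<omega> / real n) ^ p)) \<longlonglongrightarrow> expectation prod_sq"
proof (rule integral_dominated_convergence[where w = prod_sq])
  have "(\<lambda>n. y / (1 + r / real n) ^ p) \<longlonglongrightarrow> y" for y r :: real
    by real_asymp
  then show "AE \<omega> in M. (\<lambda>n. prod_sq \<omega> / (1 + head_sum \<omega> / real n) ^ p) \<longlonglongrightarrow> prod_sq \<omega>"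
    by simp
  show "AE \<omega> in M. norm (prod_sq \<omega> / (1 + head_sum \<omega> / real n) ^ p) \<le> prod_sq \<omega>" for n
    using norm_prod_sq_div_le[OF one_le_power] head_sum_nonneg by (intro AE_I2) simp
qed (simp_all add: integrable_prod_sq)

subsection \<open>Upper bound\<close>

lemma xi_le_of_tail_sum_ge:
  assumes "\<omega> \<in> space M" "p \<le> n" "0 < n" "0 < d" "d \<le> tail_sum n \<omega>"
  shows "xi n \<omega> \<le> prod_sq \<omega> * (real n / d) ^ p"
proof -
  have pos: "0 < d / real n"
    using assms by simp
  have "d / real n \<le> (head_sum \<omega> + tail_sum n \<omega>) / real n"
    using assms head_sum_nonneg[OF assms(1)] by (intro divide_right_mono) auto
  then have "prod_sq \<omega> / ((head_sum \<omega> + tail_sum n \<omega>) / real n) ^ p \<le> prod_sq \<omega> / (d / real n) ^ p"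
    using pos order_less_le_trans[OF pos] prod_sq_nonneg
    by (intro divide_left_mono power_mono) (auto intro: less_imp_le)
  then show ?thesis
    using assms by (simp add: xi_eq power_divide)
qed

lemma exists_truncation_expectation_gt:
  assumes "t < 1"
  shows "\<exists>L>0. t < expectation (\<lambda>\<omega>. min (X 0 \<omega>) L)"
proof -
  have "(\<lambda>k. expectation (\<lambda>\<omega>. min (X 0 \<omega>) (real k))) \<longlonglongrightarrow> expectation (X 0)"
  proof (rule integral_dominated_convergence[where w = "X 0"])
    have "(\<lambda>k. min x (real k)) \<longlonglongrightarrow> x" for x :: real
      by real_asymp
    then show "AE \<omega> in M. (\<lambda>k. min (X 0 \<omega>) (real k)) \<longlonglongrightarrow> X 0 \<omega>"
      by simp
    show "AE \<omega> in M. norm (min (X 0 \<omega>) (real k)) \<le> X 0 \<omega>" for k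
      using X_pos[of _ 0] by (intro AE_I2) (auto simp: min_def intro: less_imp_le)
  qed (simp_all add: integrable_X)
  then have "\<forall>\<^sub>F k in sequentially. t < expectation (\<lambda>\<omega>. min (X 0 \<omega>) (real k)) \<and> 0 < k"
    using assms expectation_X0 by (intro eventually_conj order_tendstoD(1) eventually_gt_at_top) auto
  then obtain k :: nat where "t < expectation (\<lambda>\<omega>. min (X 0 \<omega>) (real k))" "0 < k"
    using eventually_happens'[OF trivial_limit_sequentially] by blast
  then show ?thesis
    by (intro exI[of _ "real k"]) simp
qed

lemma prob_truncated_tail_sum_le:
  assumes "p < n" "0 < L" "t \<le> expectation (\<lambda>\<omega>. min (X 0 \<omega>) L)"
  defines "c \<equiv> 2 * (expectation (\<lambda>\<omega>. min (X 0 \<omega>) L) - t)\<^sup>2 / L\<^sup>2"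
  shows "prob {\<omega> \<in> space M. (\<Sum>i\<in>{p..<n}. min (X i \<omega>) L) \<le> t * (real n - real p)}
    \<le> exp (- c * (real n - real p))"
proof -
  define \<mu> where "\<mu> = expectation (\<lambda>\<omega>. min (X 0 \<omega>) L)"
  interpret Hoeffding_ineq_iid M "{p..<n}" "\<lambda>i \<omega>. min (X i \<omega>) L" "\<lambda>\<omega>. min (X 0 \<omega>) L" 0 L \<mu>
  proof unfold_locales
    show "indep_vars (\<lambda>_. borel) (\<lambda>i \<omega>. min (X i \<omega>) L) {p..<n}"
      by (rule indep_vars_comp_X) simp
    show "distr M borel (\<lambda>\<omega>. min (X i \<omega>) L) = distr M borel (\<lambda>\<omega>. min (X 0 \<omega>) L)" for i
      by (rule distr_comp_X) simp
    show "AE \<omega> in M. min (X 0 \<omega>) L \<in> {0..L}"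
      using X_pos assms(2) by (intro AE_I2) (auto intro: less_imp_le)
  qed (simp_all add: \<mu>_def)
  have card: "real (card {p..<n}) = real n - real p"
    using assms(1) by (simp add: of_nat_diff)
  have exponent: "- 2 * N * (\<mu> - t)\<^sup>2 / (L - 0)\<^sup>2 = - c * N" for N
    unfolding c_def \<mu>_def by (simp add: field_simps)
  have "prob {\<omega> \<in> space M. (\<Sum>i\<in>{p..<n}. min (X i \<omega>) L) \<le> t * (real n - real p)}
      = prob {\<omega> \<in> space M. (\<Sum>i\<in>{p..<n}. min (X i \<omega>) L) / real (card {p..<n}) \<le> \<mu> - (\<mu> - t)}"
    using assms(1) card by (simp add: pos_divide_le_eq)
  also have "\<dots> \<le> exp (- 2 * real (card {p..<n}) * (\<mu> - t)\<^sup>2 / (L - 0)\<^sup>2)"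
    using assms(1,2) assms(3)[folded \<mu>_def] by (intro Hoeffding_ineq_le') auto
  finally show ?thesis
    unfolding exponent card .
qed

lemma prod_X_mult_tail:
  fixes G :: "(nat \<Rightarrow> real) \<Rightarrow> real"
  assumes "G \<in> borel_measurable (PiM {p..<n} (\<lambda>_. borel))"
    and "integrable M (\<lambda>\<omega>. G (restrict (\<lambda>i. X i \<omega>) {p..<n}))"
  shows "integrable M (\<lambda>\<omega>. prod_X \<omega> * G (restrict (\<lambda>i. X i \<omega>) {p..<n}))"
    and "expectation (\<lambda>\<omega>. prod_X \<omega> * G (restrict (\<lambda>i. X i \<omega>) {p..<n}))
       = expectation (\<lambda>\<omega>. G (restrict (\<lambda>i. X i \<omega>) {p..<n}))"
proof -
  define F where "F x = (\<Prod>i<p. x i)" for x :: "nat \<Rightarrow> real"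
  have "{..<p} \<inter> {p..<n} = {}"
    by auto
  moreover have "F \<in> borel_measurable (PiM {..<p} (\<lambda>_. borel))"
    unfolding F_def by measurable
  moreover have "F (restrict (\<lambda>i. X i \<omega>) {..<p}) = prod_X \<omega>" for \<omega>
    unfolding F_def prod_X_def by simp
  ultimately show "integrable M (\<lambda>\<omega>. prod_X \<omega> * G (restrict (\<lambda>i. X i \<omega>) {p..<n}))"
    and "expectation (\<lambda>\<omega>. prod_X \<omega> * G (restrict (\<lambda>i. X i \<omega>) {p..<n}))
       = expectation (\<lambda>\<omega>. G (restrict (\<lambda>i. X i \<omega>) {p..<n}))"
    using indep_blocks_integral_mult[of "{..<p}" "{p..<n}" F G] assms integrable_prod_X
    by (simp_all add: expectation_prod_X)
qed

lemma prod_X_indicator_tail_event: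
  fixes P :: "(nat \<Rightarrow> real) \<Rightarrow> bool"
  assumes [measurable]: "Measurable.pred (PiM {p..<n} (\<lambda>_. borel)) P"
    and B: "B = {\<omega> \<in> space M. P (restrict (\<lambda>i. X i \<omega>) {p..<n})}"
  shows "integrable M (\<lambda>\<omega>. prod_X \<omega> * indicator B \<omega>)"
    and "expectation (\<lambda>\<omega>. prod_X \<omega> * indicator B \<omega>) = prob B"
proof -
  define G where "G x = (if P x then 1 else 0 :: real)" for x :: "nat \<Rightarrow> real"
  have G_measurable [measurable]: "G \<in> borel_measurable (PiM {p..<n} (\<lambda>_. borel))"
    and [measurable]: "B \<in> sets M"
    unfolding G_def B by measurable
  have G: "G (restrict (\<lambda>i. X i \<omega>) {p..<n}) = indicator B \<omega>" if "\<omega> \<in> space M" for \<omega>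
    using that unfolding G_def B by simp
  have "integrable M (\<lambda>\<omega>. G (restrict (\<lambda>i. X i \<omega>) {p..<n})) \<longleftrightarrow> integrable M (indicator B :: 'a \<Rightarrow> real)"
    by (rule Bochner_Integration.integrable_cong) (simp_all add: G)
  then have int_G: "integrable M (\<lambda>\<omega>. G (restrict (\<lambda>i. X i \<omega>) {p..<n}))"
    by (simp add: integrable_real_indicator less_top[symmetric])
  note tail = prod_X_mult_tail[OF G_measurable int_G]
  have "integrable M (\<lambda>\<omega>. prod_X \<omega> * G (restrict (\<lambda>i. X i \<omega>) {p..<n}))
      \<longleftrightarrow> integrable M (\<lambda>\<omega>. prod_X \<omega> * indicator B \<omega>)"
    by (rule Bochner_Integration.integrable_cong) (simp_all add: G)
  with tail(1) show "integrable M (\<lambda>\<omega>. prod_X \<omega> * indicator B \<omega>)"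
    by blast
  have "expectation (\<lambda>\<omega>. prod_X \<omega> * indicator B \<omega>)
      = expectation (\<lambda>\<omega>. prod_X \<omega> * G (restrict (\<lambda>i. X i \<omega>) {p..<n}))"
    by (rule Bochner_Integration.integral_cong) (simp_all add: G)
  also have "\<dots> = expectation (\<lambda>\<omega>. G (restrict (\<lambda>i. X i \<omega>) {p..<n}))"
    by (rule tail(2))
  also have "\<dots> = expectation (indicator B)"
    by (rule Bochner_Integration.integral_cong) (simp_all add: G)
  finally show "expectation (\<lambda>\<omega>. prod_X \<omega> * indicator B \<omega>) = prob B"
    by simp
qed

lemma expectation_xi_le:
  assumes "p < n" "0 < t" "0 < L" "t \<le> expectation (\<lambda>\<omega>. min (X 0 \<omega>) L)"
  defines "c \<equiv> 2 * (expectation (\<lambda>\<omega>. min (X 0 \<omega>) L) - t)\<^sup>2 / L\<^sup>2"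
  shows "expectation (xi n) \<le> expectation prod_sq * (real n / ((real n - real p) * t)) ^ p
    + real n ^ p * exp (- c * (real n - real p))"
proof -
  define B where "B = {\<omega> \<in> space M. (\<Sum>i\<in>{p..<n}. min (X i \<omega>) L) \<le> t * (real n - real p)}"
  define K where "K = (real n / ((real n - real p) * t)) ^ p"
  have "B = {\<omega> \<in> space M. (\<Sum>i\<in>{p..<n}. min (restrict (\<lambda>i. X i \<omega>) {p..<n} i) L) \<le> t * (real n - real p)}"
    unfolding B_def by simp
  note QB = prod_X_indicator_tail_event[OF _ this]
  have pointwise: "xi n \<omega> \<le> prod_sq \<omega> * K + real n ^ p * (prod_X \<omega> * indicator B \<omega>)"
    if \<omega>: "\<omega> \<in> space M" for \<omega>
  proof (cases "\<omega> \<in> B")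
    case True
    have "0 \<le> prod_sq \<omega> * K"
      using assms(1,2) prod_sq_nonneg unfolding K_def by simp
    moreover have "xi n \<omega> \<le> real n ^ p * prod_X \<omega>"
      using assms(1) by (intro xi_le_prod_X[OF \<omega>]) auto
    ultimately show ?thesis
      using True by simp
  next
    case False
    then have "t * (real n - real p) < (\<Sum>i\<in>{p..<n}. min (X i \<omega>) L)"
      using \<omega> unfolding B_def by auto
    also have "\<dots> \<le> tail_sum n \<omega>"
      unfolding tail_sum_def by (intro sum_mono) simp
    finally have "(real n - real p) * t \<le> tail_sum n \<omega>"
      by (simp add: mult.commute)
    then have "xi n \<omega> \<le> prod_sq \<omega> * K"
      unfolding K_def using \<omega> assms(1,2) by (intro xi_le_of_tail_sum_ge) auto
    then show ?thesis
      using False by simp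
  qed
  have "expectation (xi n) \<le> expectation (\<lambda>\<omega>. prod_sq \<omega> * K + real n ^ p * (prod_X \<omega> * indicator B \<omega>))"
  proof (rule integral_mono)
    show "integrable M (xi n)"
      using assms(1) by (intro integrable_xi) auto
    show "integrable M (\<lambda>\<omega>. prod_sq \<omega> * K + real n ^ p * (prod_X \<omega> * indicator B \<omega>))"
      using integrable_prod_sq QB(1) by simp
  qed (rule pointwise)
  also have "\<dots> = expectation prod_sq * K + real n ^ p * prob B"
    using integrable_prod_sq QB by simp
  also have "\<dots> \<le> expectation prod_sq * K + real n ^ p * exp (- c * (real n - real p))"
    using prob_truncated_tail_sum_le[OF assms(1,3,4)] unfolding B_def c_def
    by (intro add_left_mono mult_left_mono) auto
  finally show ?thesis
    unfolding K_def .
qed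

lemma eventually_expectation_xi_less:
  assumes "0 < t" "t < 1" "expectation prod_sq / t ^ p < y"
  shows "\<forall>\<^sub>F n in sequentially. expectation (xi n) < y"
proof -
  obtain L where L: "0 < L" "t < expectation (\<lambda>\<omega>. min (X 0 \<omega>) L)"
    using exists_truncation_expectation_gt[OF assms(2)] by blast
  define c where "c = 2 * (expectation (\<lambda>\<omega>. min (X 0 \<omega>) L) - t)\<^sup>2 / L\<^sup>2"
  have "0 < c"
    using L unfolding c_def by simp
  from order_tendstoD(2)[OF tendsto_ratio_power_add_power_exp[OF \<open>0 < c\<close> assms(1), where m = p] assms(3)]
    eventually_gt_at_top[of p]
  show ?thesis
  proof eventually_elim
    case (elim n)
    have "expectation (xi n) \<le> expectation prod_sq * (real n / ((real n - real p) * t)) ^ p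
        + real n ^ p * exp (- c * (real n - real p))"
      unfolding c_def using elim(2) assms(1) L by (intro expectation_xi_le) auto
    with elim(1) show ?case
      by linarith
  qed
qed

lemma tendsto_expectation_xi: "(\<lambda>n. expectation (xi n)) \<longlonglongrightarrow> expectation prod_sq"
proof (rule order_tendstoI)
  fix y assume "y < expectation prod_sq"
  from order_tendstoD(1)[OF tendsto_expectation_lower_bound this] eventually_ge_at_top[of "Suc p"]
  show "\<forall>\<^sub>F n in sequentially. y < expectation (xi n)"
  proof eventually_elim
    case (elim n)
    then show ?case
      using expectation_xi_ge[of n] by simp
  qed
next
  fix y assume "expectation prod_sq < y"
  moreover have "((\<lambda>t. e / t ^ p) \<longlongrightarrow> e) (at_left 1)" for e :: real
    by real_asymp
  ultimately have "\<forall>\<^sub>F t in at_left 1. expectation prod_sq / t ^ p < y \<and> t \<in> {0<..<1}"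
    by (intro eventually_conj order_tendstoD(2) eventually_at_left_real) auto
  then obtain t where "expectation prod_sq / t ^ p < y" "0 < t" "t < 1"
    using eventually_happens'[OF trivial_limit_at_left_real] by auto
  then show "\<forall>\<^sub>F n in sequentially. expectation (xi n) < y"
    by (rule eventually_expectation_xi_less[rotated -1])
qed

end

theorem lemma3:
  fixes M :: "'a measure" and X :: "nat \<Rightarrow> 'a \<Rightarrow> real" and p :: nat
  assumes "prob_space M"
    and rv: "\<And>i. X i \<in> borel_measurable M"
    and indep: "prob_space.indep_vars M (\<lambda>_. borel) X UNIV"
    and ident: "\<And>i. distr M borel (X i) = distr M borel (X 0)"
    and pos: "\<And>i \<omega>. \<omega> \<in> space M \<Longrightarrow> X i \<omega> > 0"
    and int1: "integrable M (X 0)"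
    and mean: "prob_space.expectation M (X 0) = 1"
    and p2: "p \<ge> 2"
    and intp: "integrable M (\<lambda>\<omega>. X 0 \<omega> ^ p)"
  shows "(\<lambda>n. prob_space.expectation M
            (\<lambda>\<omega>. (\<Prod>i<p. (X i \<omega>)\<^sup>2) / ((\<Sum>i<n. X i \<omega>) / real n) ^ p))
         \<longlonglongrightarrow> (prob_space.expectation M (\<lambda>\<omega>. (X 0 \<omega>)\<^sup>2)) ^ p"
proof -
  interpret prob_space M by fact
  have "integrable M (\<lambda>\<omega>. (X 0 \<omega>)\<^sup>2)"
    using integrable_power_le[OF rv intp _ less_imp_le[OF pos]] p2 by simp
  then interpret self_normalized_products M X p
    using assms by unfold_locales
  show ?thesis
    using tendsto_expectation_xi unfolding xi_def prod_sq_def expectation_prod_sq[unfolded prod_sq_def] .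
qed

end
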